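(* Consider the binary noisy-label setting described in the context, and assume ${\mathbb P}(Y=+1)={\mathbb P}(Y=-1)$ and $e_+=e_-$. Let $\mathcal H$ be a hypothesis space, $h^*_f\in\arg\max_{h\in\mathcal H}D_f(P_{h\times Y}\|Q_{h\times Y})$, and $\mathcal H^*$ as defined in the context. Then for each of the following $f$-divergences, $D_f$ is $\mathcal H^*$-robust, i.e. $h^*_f=\arg\max_{h\in\mathcal H^*}D_f(\tilde P_{h\times\tilde Y}\|\tilde Q_{h\times\tilde Y})$: Total Variation $f(v)=\frac12|v-1|$; Jenson–Shannon $f(v)=v\log v-(v+1)\log\frac{v+1}{2}$ (with $f^*(u)=-\log(2-e^u)$); Squared Hellinger $f(v)=(\sqrt v-1)^2$; Pearson $\chi^2$ $f(v)=(v-1)^2$; Neyman $\chi^2$ $f(v)=(1-v)^2/v$; KL $f(v)=v\log v$; Reverse KL $f(v)=-\log v$.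
   Context: $(X,Y)$ with $X\in\mathcal X$, $Y\in\{-1,+1\}$; noisy label $\tilde Y$ generated from $Y$, conditionally independently of $X$ given $Y$, with $e_+={\mathbb P}(\tilde Y=-1\mid Y=+1)$, $e_-={\mathbb P}(\tilde Y=+1\mid Y=-1)$, $e_++e_-<1$. A hypothesis space $\mathcal H$ is a set of classifiers $h:\mathcal X\to\{-1,+1\}$. $P_{h\times Y}(y,y')={\mathbb P}(h(X)=y,Y=y')$, $Q_{h\times Y}(y,y')={\mathbb P}(h(X)=y){\mathbb P}(Y=y')$, $\tilde P_{h\times\tilde Y},\tilde Q_{h\times\tilde Y}$ the same with $\tilde Y$; $D_f(P\|Q)=\sum_z q(z)f(p(z)/q(z))$. For $R\in\{Y,\tilde Y\}$ the fitness is ${\rm FIT}(h=y,R=y')=\frac{{\mathbb P}(h(X)=y\mid R=y')}{{\mathbb P}(h(X)=y)}$. Define $\mathcal H^*=\{h\in\mathcal H:\min_y{\rm FIT}(h=y,\tilde Y=y)\ge\max_y{\rm FIT}(h^*_f=y,Y=y)\ge1\}\cup\{h^*_f\}$. *)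

theory Defs
  imports "HOL-Probability.Probability"
begin

definition labels :: "int set" where
  "labels = {-1, 1}"

definition Pj :: "'a measure \<Rightarrow> ('a \<Rightarrow> int) \<Rightarrow> ('a \<Rightarrow> int) \<Rightarrow> int \<times> int \<Rightarrow> real" where
  "Pj M A B = (\<lambda>(y, y'). measure M {\<omega> \<in> space M. A \<omega> = y \<and> B \<omega> = y'})"

definition Qj :: "'a measure \<Rightarrow> ('a \<Rightarrow> int) \<Rightarrow> ('a \<Rightarrow> int) \<Rightarrow> int \<times> int \<Rightarrow> real" where
  "Qj M A B = (\<lambda>(y, y'). measure M {\<omega> \<in> space M. A \<omega> = y}
                        * measure M {\<omega> \<in> space M. B \<omega> = y'})"

text \<open>f-divergence D_f(P||Q) = sum_z q(z) f(p(z)/q(z)) over z in {-1,+1}^2, extended-real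
valued so that f may take the value +infinity at 0 (reverse KL, Neyman chi^2);
terms with q(z) = 0 vanish (ereal 0 * infinity = 0).\<close>
definition fdiv :: "(real \<Rightarrow> ereal) \<Rightarrow> (int \<times> int \<Rightarrow> real) \<Rightarrow> (int \<times> int \<Rightarrow> real) \<Rightarrow> ereal" where
  "fdiv f p q = (\<Sum>z \<in> labels \<times> labels. ereal (q z) * f (p z / q z))"

definition FIT :: "'a measure \<Rightarrow> ('a \<Rightarrow> int) \<Rightarrow> ('a \<Rightarrow> int) \<Rightarrow> int \<Rightarrow> int \<Rightarrow> real" where
  "FIT M A R y y' =
     (measure M {\<omega> \<in> space M. A \<omega> = y \<and> R \<omega> = y'} / measure M {\<omega> \<in> space M. R \<omega> = y'})
     / measure M {\<omega> \<in> space M. A \<omega> = y}"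

definition Hstar :: "'a measure \<Rightarrow> ('a \<Rightarrow> 'x) \<Rightarrow> ('a \<Rightarrow> int) \<Rightarrow> ('a \<Rightarrow> int)
                     \<Rightarrow> ('x \<Rightarrow> int) set \<Rightarrow> ('x \<Rightarrow> int) \<Rightarrow> ('x \<Rightarrow> int) set" where
  "Hstar M X Y Yt H hs =
     {h \<in> H. min (FIT M (h \<circ> X) Yt 1 1) (FIT M (h \<circ> X) Yt (-1) (-1))
               \<ge> max (FIT M (hs \<circ> X) Y 1 1) (FIT M (hs \<circ> X) Y (-1) (-1))
             \<and> max (FIT M (hs \<circ> X) Y 1 1) (FIT M (hs \<circ> X) Y (-1) (-1)) \<ge> 1}
     \<union> {hs}"

definition f_TV :: "real \<Rightarrow> ereal" where
  "f_TV v = ereal (\<bar>v - 1\<bar> / 2)"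
definition f_JS :: "real \<Rightarrow> ereal" where
  "f_JS v = ereal (v * ln v - (v + 1) * ln ((v + 1) / 2))"
definition f_SH :: "real \<Rightarrow> ereal" where
  "f_SH v = ereal ((sqrt v - 1)\<^sup>2)"
definition f_Pearson :: "real \<Rightarrow> ereal" where
  "f_Pearson v = ereal ((v - 1)\<^sup>2)"
definition f_Neyman :: "real \<Rightarrow> ereal" where
  "f_Neyman v = (if v = 0 then \<infinity> else ereal ((1 - v)\<^sup>2 / v))"
definition f_KL :: "real \<Rightarrow> ereal" where
  "f_KL v = ereal (v * ln v)"
definition f_RKL :: "real \<Rightarrow> ereal" where
  "f_RKL v = (if v = 0 then \<infinity> else ereal (- ln v))"

end

theory Submission
  imports Defs "HOL-Real_Asymp.Real_Asymp"
begin

text \<open>With balanced classes, the joint law of a classifier \<open>h(X)\<close> and the label is determined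
  by \<open>a = P(h = 1)\<close> and the margin \<open>t = P(h = 1, Y = 1) - P(h = 1, Y = -1)\<close>; symmetric noise
  keeps the classes balanced and multiplies \<open>t\<close> by \<open>1 - 2e\<close>. In these coordinates
  \<open>D\<^sub>f = a/2 G(t/a) + (1 - a)/2 G(t/(1 - a))\<close> with \<open>G(s) = f(1 + s) + f(1 - s)\<close>, and for each
  of the seven generators \<open>G\<close> is strictly increasing on \<open>[0, 1]\<close>. The condition defining
  \<open>H\<^sup>*\<close> says that the noisy fitness ratios \<open>1 + (1 - 2e) t/a\<close>, \<open>1 + (1 - 2e) t/(1 - a)\<close> of
  \<open>h\<close> dominate the clean ones of \<open>h\<^sup>*\<^sub>f\<close>. Unless \<open>t = 0\<close>, when the noisy divergence
  of \<open>h\<close> vanishes, monotonicity of \<open>G\<close> then makes the clean divergence of \<open>h\<close> strictly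
  larger than that of \<open>h\<^sup>*\<^sub>f\<close>, contradicting maximality.\<close>

section \<open>Symmetrized generators\<close>

definition symmetrized :: "(real \<Rightarrow> ereal) \<Rightarrow> real \<Rightarrow> ereal" where
  "symmetrized f s = f (1 + s) + f (1 - s)"

lemma symmetrized_minus [simp]: "symmetrized f (- s) = symmetrized f s"
  by (simp add: symmetrized_def add.commute)

locale admissible_generator =
  fixes f :: "real \<Rightarrow> ereal"
  assumes f_one: "f 1 = 0"
    and f_not_MInfty: "f v \<noteq> -\<infinity>"
    and f_finite_pos: "0 < v \<Longrightarrow> f v \<noteq> \<infinity>"
    and symmetrized_strict_mono: "strict_mono_on {0..1} (symmetrized f)"
begin

lemma symmetrized_zero [simp]: "symmetrized f 0 = 0"
  by (simp add: symmetrized_def f_one)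

lemma symmetrized_mono: "0 \<le> x \<Longrightarrow> x \<le> y \<Longrightarrow> y \<le> 1 \<Longrightarrow> symmetrized f x \<le> symmetrized f y"
  using symmetrized_strict_mono by (auto intro: strict_mono_on_leD)

lemma symmetrized_less: "0 \<le> x \<Longrightarrow> x < y \<Longrightarrow> y \<le> 1 \<Longrightarrow> symmetrized f x < symmetrized f y"
  using symmetrized_strict_mono by (simp add: strict_mono_on_def)

lemma symmetrized_nonneg:
  assumes "\<bar>s\<bar> \<le> 1"
  shows "0 \<le> symmetrized f s"
  using symmetrized_mono[of 0 "\<bar>s\<bar>"] assms by (cases "0 \<le> s") auto

lemma symmetrized_finite:
  assumes "\<bar>s\<bar> < 1"
  shows "\<bar>symmetrized f s\<bar> \<noteq> \<infinity>"
  using assms f_not_MInfty f_finite_pos[of "1 + s"] f_finite_pos[of "1 - s"]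
  by (auto simp: symmetrized_def)

end

lemma strict_mono_on_ereal_iff [simp]:
  "strict_mono_on S (\<lambda>x. ereal (g x)) \<longleftrightarrow> strict_mono_on S g"
  by (simp add: strict_mono_on_def)

lemma strict_mono_on_if_deriv_pos:
  fixes g g' :: "real \<Rightarrow> real"
  assumes "continuous_on {a..b} g"
    and "\<And>s. a < s \<Longrightarrow> s < b \<Longrightarrow> (g has_real_derivative g' s) (at s)"
    and "\<And>s. a < s \<Longrightarrow> s < b \<Longrightarrow> 0 < g' s"
  shows "strict_mono_on {a..b} g"
proof (rule strict_mono_onI)
  fix x y assume xy: "x \<in> {a..b}" "y \<in> {a..b}" "x < y"
  have "continuous_on {x..y} g"
    by (rule continuous_on_subset[OF assms(1)]) (use xy in auto)
  then show "g x < g y"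
  proof (rule DERIV_pos_imp_increasing_open[OF \<open>x < y\<close>, rotated])
    fix s assume "x < s" "s < y"
    with xy have "a < s" "s < b"
      by auto
    then show "\<exists>d. (g has_real_derivative d) (at s) \<and> 0 < d"
      using assms(2,3) by blast
  qed
qed

lemma strict_mono_on_Icc_with_infinity:
  fixes g :: "real \<Rightarrow> real"
  assumes "strict_mono_on {a..<b} g" and "\<And>s. s \<in> {a..<b} \<Longrightarrow> G s = ereal (g s)"
    and "G b = \<infinity>"
  shows "strict_mono_on {a..b} G"
proof (rule strict_mono_onI)
  fix x y assume xy: "x \<in> {a..b}" "y \<in> {a..b}" "x < y"
  then have x: "x \<in> {a..<b}"
    by auto
  show "G x < G y"
  proof (cases "y = b")
    case True
    then show ?thesis
      using assms(2)[OF x] assms(3) by simp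
  next
    case False
    with xy have "y \<in> {a..<b}"
      by auto
    then show ?thesis
      using assms(1,2) x xy(3) by (simp add: strict_mono_onD)
  qed
qed

lemma continuous_on_x_ln: "continuous_on {0..} (\<lambda>x::real. x * ln x)"
proof (rule continuous_on_eq_continuous_within[THEN iffD2], intro ballI)
  fix x :: real assume "x \<in> {0..}"
  show "continuous (at x within {0..}) (\<lambda>x. x * ln x)"
  proof (cases "x = 0")
    case True
    have "((\<lambda>x::real. x * ln x) \<longlongrightarrow> 0) (at_right 0)" by real_asymp
    then show ?thesis using True by (simp add: continuous_within at_within_Ici_at_right)
  next
    case False
    with \<open>x \<in> {0..}\<close> have "isCont (\<lambda>x. x * ln x) x"
      by (auto intro!: continuous_intros)
    then show ?thesis
      using continuous_at_imp_continuous_at_within by blast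
  qed
qed

lemma continuous_on_x_ln_compose [continuous_intros]:
  fixes g :: "real \<Rightarrow> real"
  assumes "continuous_on S g" and "\<And>x. x \<in> S \<Longrightarrow> 0 \<le> g x"
  shows "continuous_on S (\<lambda>x. g x * ln (g x))"
  using continuous_on_compose2[OF continuous_on_x_ln assms(1)] assms(2) by auto

lemma admissible_generator_TV: "admissible_generator f_TV"
proof
  have "symmetrized f_TV s = ereal \<bar>s\<bar>" for s
    by (simp add: symmetrized_def f_TV_def)
  then show "strict_mono_on {0..1} (symmetrized f_TV)"
    by (auto simp: strict_mono_on_def)
qed (simp_all add: f_TV_def)

lemma admissible_generator_Pearson: "admissible_generator f_Pearson"
proof
  have "symmetrized f_Pearson s = ereal (2 * s\<^sup>2)" for s
    by (simp add: symmetrized_def f_Pearson_def)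
  then show "strict_mono_on {0..1} (symmetrized f_Pearson)"
    by (auto simp: strict_mono_on_def power_strict_mono)
qed (simp_all add: f_Pearson_def)

lemma admissible_generator_SH: "admissible_generator f_SH"
proof
  have sq: "(sqrt (1 + s) + sqrt (1 - s))\<^sup>2 = 2 + 2 * sqrt (1 - s\<^sup>2)" if "\<bar>s\<bar> \<le> 1" for s :: real
  proof -
    have "sqrt (1 + s) * sqrt (1 - s) = sqrt (1 - s\<^sup>2)"
      by (simp add: real_sqrt_mult[symmetric] power2_eq_square algebra_simps)
    then show ?thesis
      using that by (simp add: power2_eq_square algebra_simps)
  qed
  have "strict_mono_on {0..1} (\<lambda>s. 4 - 2 * (sqrt (1 + s) + sqrt (1 - s)))"
  proof (rule strict_mono_onI)
    fix x y :: real assume "x \<in> {0..1}" "y \<in> {0..1}" "x < y"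
    then have "(sqrt (1 + y) + sqrt (1 - y))\<^sup>2 < (sqrt (1 + x) + sqrt (1 - x))\<^sup>2"
      using sq[of x] sq[of y] by (simp add: power_strict_mono)
    then have "sqrt (1 + y) + sqrt (1 - y) < sqrt (1 + x) + sqrt (1 - x)"
      by (rule power_less_imp_less_base) (use \<open>x \<in> {0..1}\<close> in simp)
    then show "4 - 2 * (sqrt (1 + x) + sqrt (1 - x)) < 4 - 2 * (sqrt (1 + y) + sqrt (1 - y))"
      by simp
  qed
  moreover have "symmetrized f_SH s = ereal (4 - 2 * (sqrt (1 + s) + sqrt (1 - s)))"
    if "s \<in> {0..1}" for s
    using that by (simp add: symmetrized_def f_SH_def power2_eq_square algebra_simps)
  ultimately show "strict_mono_on {0..1} (symmetrized f_SH)"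
    by (simp add: strict_mono_on_def)
qed (simp_all add: f_SH_def)

lemma admissible_generator_Neyman: "admissible_generator f_Neyman"
proof
  have "strict_mono_on {0..<1} (\<lambda>s::real. 2 * s\<^sup>2 / (1 - s\<^sup>2))"
  proof (rule strict_mono_onI)
    fix x y :: real assume "x \<in> {0..<1}" "y \<in> {0..<1}" "x < y"
    then have "x\<^sup>2 < y\<^sup>2" "y\<^sup>2 < 1"
      by (auto simp: power_strict_mono abs_square_less_1)
    then have "2 * x\<^sup>2 / (1 - x\<^sup>2) < 2 * y\<^sup>2 / (1 - x\<^sup>2)"
      by (intro divide_strict_right_mono) auto
    also have "\<dots> \<le> 2 * y\<^sup>2 / (1 - y\<^sup>2)"
      using \<open>x\<^sup>2 < y\<^sup>2\<close> \<open>y\<^sup>2 < 1\<close> by (intro divide_left_mono) auto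
    finally show "2 * x\<^sup>2 / (1 - x\<^sup>2) < 2 * y\<^sup>2 / (1 - y\<^sup>2)" .
  qed
  moreover have "symmetrized f_Neyman s = ereal (2 * s\<^sup>2 / (1 - s\<^sup>2))" if "s \<in> {0..<1}" for s
    using that by (simp add: symmetrized_def f_Neyman_def field_simps power2_eq_square)
  moreover have "symmetrized f_Neyman 1 = \<infinity>"
    by (simp add: symmetrized_def f_Neyman_def)
  ultimately show "strict_mono_on {0..1} (symmetrized f_Neyman)"
    by (rule strict_mono_on_Icc_with_infinity)
qed (simp_all add: f_Neyman_def)

lemma admissible_generator_RKL: "admissible_generator f_RKL"
proof
  have "strict_mono_on {0..<1} (\<lambda>s::real. - ln (1 - s\<^sup>2))"
    by (rule strict_mono_onI) (auto simp: power_strict_mono abs_square_less_1)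
  moreover have "symmetrized f_RKL s = ereal (- ln (1 - s\<^sup>2))" if "s \<in> {0..<1}" for s
  proof -
    have "1 - s\<^sup>2 = (1 + s) * (1 - s)"
      by (simp add: power2_eq_square algebra_simps)
    with that have "ln (1 - s\<^sup>2) = ln (1 + s) + ln (1 - s)"
      by (simp add: ln_mult)
    then show ?thesis
      using that by (simp add: symmetrized_def f_RKL_def)
  qed
  moreover have "symmetrized f_RKL 1 = \<infinity>"
    by (simp add: symmetrized_def f_RKL_def)
  ultimately show "strict_mono_on {0..1} (symmetrized f_RKL)"
    by (rule strict_mono_on_Icc_with_infinity)
qed (simp_all add: f_RKL_def)

lemma admissible_generator_KL: "admissible_generator f_KL"
proof
  have "strict_mono_on {0..1} (\<lambda>s::real. (1 + s) * ln (1 + s) + (1 - s) * ln (1 - s))"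
  proof (rule strict_mono_on_if_deriv_pos)
    fix s :: real assume "0 < s" "s < 1"
    then show "((\<lambda>s. (1 + s) * ln (1 + s) + (1 - s) * ln (1 - s)) has_real_derivative
        ln (1 + s) - ln (1 - s)) (at s)"
      by (auto intro!: derivative_eq_intros)
    show "0 < ln (1 + s) - ln (1 - s)"
      using \<open>0 < s\<close> \<open>s < 1\<close> by simp
  qed (auto intro!: continuous_intros)
  moreover have "symmetrized f_KL = (\<lambda>s. ereal ((1 + s) * ln (1 + s) + (1 - s) * ln (1 - s)))"
    by (simp add: fun_eq_iff symmetrized_def f_KL_def)
  ultimately show "strict_mono_on {0..1} (symmetrized f_KL)"
    by simp
qed (simp_all add: f_KL_def)

lemma admissible_generator_JS: "admissible_generator f_JS"
proof
  let ?g = "\<lambda>s::real. (1 + s) * ln (1 + s) - (2 + s) * ln ((2 + s) / 2)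
                     + ((1 - s) * ln (1 - s) - (2 - s) * ln ((2 - s) / 2))"
  have "strict_mono_on {0..1} ?g"
  proof (rule strict_mono_on_if_deriv_pos)
    fix s :: real assume s: "0 < s" "s < 1"
    have "((\<lambda>s. (1 + s) * ln (1 + s)) has_real_derivative ln (1 + s) + 1) (at s)"
      and "((\<lambda>s. (2 + s) * ln ((2 + s) / 2)) has_real_derivative ln ((2 + s) / 2) + 1) (at s)"
      and "((\<lambda>s. (1 - s) * ln (1 - s)) has_real_derivative - ln (1 - s) - 1) (at s)"
      and "((\<lambda>s. (2 - s) * ln ((2 - s) / 2)) has_real_derivative - ln ((2 - s) / 2) - 1) (at s)"
      using s by (auto intro!: derivative_eq_intros)
    then have "(?g has_real_derivative (ln (1 + s) + 1 - (ln ((2 + s) / 2) + 1))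
        + (- ln (1 - s) - 1 - (- ln ((2 - s) / 2) - 1))) (at s)"
      by (intro DERIV_add DERIV_diff)
    then show "(?g has_real_derivative
        (ln (1 + s) - ln ((2 + s) / 2)) - (ln (1 - s) - ln ((2 - s) / 2))) (at s)"
      by (simp add: algebra_simps)
    have "(1 - s) * (2 + s) < (1 + s) * (2 - s)"
      using s by (simp add: algebra_simps)
    then have "ln ((1 - s) * (2 + s)) < ln ((1 + s) * (2 - s))"
      using s by simp
    then show "0 < (ln (1 + s) - ln ((2 + s) / 2)) - (ln (1 - s) - ln ((2 - s) / 2))"
      using s by (simp add: ln_mult ln_div)
  qed (auto intro!: continuous_intros)
  moreover have "symmetrized f_JS = (\<lambda>s. ereal (?g s))"
    by (simp add: fun_eq_iff symmetrized_def f_JS_def algebra_simps)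
  ultimately show "strict_mono_on {0..1} (symmetrized f_JS)"
    by simp
qed (simp_all add: f_JS_def)

lemma admissible_generator_cases:
  "f \<in> {f_TV, f_JS, f_SH, f_Pearson, f_Neyman, f_KL, f_RKL} \<Longrightarrow> admissible_generator f"
  using admissible_generator_TV admissible_generator_JS admissible_generator_SH
    admissible_generator_Pearson admissible_generator_Neyman admissible_generator_KL
    admissible_generator_RKL by blast

section \<open>Divergence of a table with balanced columns\<close>

definition pos_margin :: "'a measure \<Rightarrow> ('a \<Rightarrow> int) \<Rightarrow> ('a \<Rightarrow> int) \<Rightarrow> real" where
  "pos_margin M Z R = \<P>(\<omega> in M. Z \<omega> = 1 \<and> R \<omega> = 1) - \<P>(\<omega> in M. Z \<omega> = 1 \<and> R \<omega> = -1)"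

text \<open>The divergence of a \<open>2 \<times> 2\<close> table with column marginals \<open>1/2\<close>, in terms of the row
  marginal \<open>a = P(Z = 1)\<close> and the margin \<open>t = pos_margin M Z R\<close>.\<close>
definition balanced_div :: "(real \<Rightarrow> ereal) \<Rightarrow> real \<Rightarrow> real \<Rightarrow> ereal" where
  "balanced_div f a t =
     ereal (a / 2) * symmetrized f (t / a) + ereal ((1 - a) / 2) * symmetrized f (t / (1 - a))"

lemma balanced_fit_max:
  fixes a t :: real
  assumes "\<bar>t\<bar> \<le> a" and "\<bar>t\<bar> \<le> 1 - a"
  shows "max ((a + t) / a) ((1 - a + t) / (1 - a)) = 1 + max (t / a) (t / (1 - a))"
proof -
  consider "a = 0" | "a = 1" | "0 < a \<and> a < 1"
    using assms by linarith
  then show ?thesis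
  proof cases
    case 3
    then have "(a + t) / a = 1 + t / a" "(1 - a + t) / (1 - a) = 1 + t / (1 - a)"
      by (simp_all add: field_simps)
    then show ?thesis
      by simp
  qed (use assms in simp_all)
qed

lemma balanced_fits_ge_one:
  fixes a t :: real
  assumes "\<bar>t\<bar> \<le> a" and "\<bar>t\<bar> \<le> 1 - a"
    and "1 \<le> (a + t) / a" and "1 \<le> (1 - a + t) / (1 - a)"
  shows "0 < a" and "a < 1" and "0 \<le> t"
proof -
  show "0 < a" "a < 1"
    using assms by (auto simp: order.order_iff_strict)
  with assms(3) show "0 \<le> t"
    by (simp add: field_simps)
qed

context admissible_generator
begin

lemma balanced_div_zero [simp]: "balanced_div f a 0 = 0"
  by (simp add: balanced_div_def)

lemma balanced_div_nonneg:
  assumes "\<bar>t\<bar> \<le> a" and "\<bar>t\<bar> \<le> 1 - a"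
  shows "0 \<le> balanced_div f a t"
proof -
  have "\<bar>t / a\<bar> \<le> 1" "\<bar>t / (1 - a)\<bar> \<le> 1"
    using assms by (auto simp: abs_divide divide_le_eq_1)
  then have "0 \<le> symmetrized f (t / a)" "0 \<le> symmetrized f (t / (1 - a))"
    by (simp_all add: symmetrized_nonneg)
  then show ?thesis
    using assms unfolding balanced_div_def by (simp add: add_nonneg_nonneg)
qed

lemma balanced_div_le_half_symmetrized:
  assumes "0 \<le> a" and "a \<le> 1" and "0 \<le> t"
    and "t / a \<le> m" and "t / (1 - a) \<le> m" and "m < 1"
  shows "balanced_div f a t \<le> symmetrized f m / 2"
proof -
  have "0 \<le> t / a" "0 \<le> t / (1 - a)"
    using assms by simp_all
  then have "0 \<le> m"
    using assms(4) by linarith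
  then obtain g where g: "symmetrized f m = ereal g"
    using symmetrized_finite[of m] \<open>m < 1\<close> by (cases "symmetrized f m") auto
  have "ereal (a / 2) * symmetrized f (t / a) \<le> ereal (a / 2) * ereal g"
    using symmetrized_mono[of "t / a" m] assms \<open>0 \<le> t / a\<close> g by (intro ereal_mult_left_mono) auto
  moreover have "ereal ((1 - a) / 2) * symmetrized f (t / (1 - a)) \<le> ereal ((1 - a) / 2) * ereal g"
    using symmetrized_mono[of "t / (1 - a)" m] assms \<open>0 \<le> t / (1 - a)\<close> g
    by (intro ereal_mult_left_mono) auto
  ultimately have "balanced_div f a t \<le> ereal (a / 2 * g + (1 - a) / 2 * g)"
    unfolding balanced_div_def using add_mono by fastforce
  also have "\<dots> = symmetrized f m / 2"
    by (simp add: g field_simps)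
  finally show ?thesis .
qed

lemma half_symmetrized_less_balanced_div:
  assumes "0 < a" and "a < 1" and "0 \<le> m"
    and "m < t / a" and "t / a \<le> 1" and "m < t / (1 - a)" and "t / (1 - a) \<le> 1"
  shows "symmetrized f m / 2 < balanced_div f a t"
proof -
  obtain g where g: "symmetrized f m = ereal g"
    using symmetrized_finite[of m] assms by (cases "symmetrized f m") auto
  have "ereal (a / 2) * ereal g < ereal (a / 2) * symmetrized f (t / a)"
    using symmetrized_less[of m "t / a"] assms g by (intro ereal_mult_strict_left_mono) auto
  moreover have "ereal ((1 - a) / 2) * ereal g < ereal ((1 - a) / 2) * symmetrized f (t / (1 - a))"
    using symmetrized_less[of m "t / (1 - a)"] assms g by (intro ereal_mult_strict_left_mono) auto
  ultimately have "ereal (a / 2 * g + (1 - a) / 2 * g) < balanced_div f a t"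
    unfolding balanced_div_def using ereal_add_strict_mono2 by fastforce
  moreover have "ereal (a / 2 * g + (1 - a) / 2 * g) = symmetrized f m / 2"
    by (simp add: g field_simps)
  ultimately show ?thesis
    by simp
qed

text \<open>For \<open>c < 1\<close> the fitness hypothesis forces \<open>t \<ge> 0\<close>. If \<open>t > 0\<close>, both \<open>t / a\<close> and
  \<open>t / (1 - a)\<close> strictly exceed \<open>m = max (ts / as) (ts / (1 - as))\<close>, so \<open>max_clean\<close> fails
  by monotonicity of \<open>symmetrized f\<close>; hence \<open>t = 0\<close> and the left-hand side vanishes.\<close>
lemma balanced_div_noisy_le:
  fixes a t as ts c :: real
  assumes bounds: "\<bar>t\<bar> \<le> a" "\<bar>t\<bar> \<le> 1 - a" "\<bar>ts\<bar> \<le> as" "\<bar>ts\<bar> \<le> 1 - as"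
    and c: "0 < c" "c \<le> 1"
    and max_clean: "balanced_div f a t \<le> balanced_div f as ts"
    and fits: "max ((as + ts) / as) ((1 - as + ts) / (1 - as))
                 \<le> min ((a + c * t) / a) ((1 - a + c * t) / (1 - a))"
    and fits_ge_one: "1 \<le> max ((as + ts) / as) ((1 - as + ts) / (1 - as))"
  shows "balanced_div f a (c * t) \<le> balanced_div f as (c * ts)"
proof (cases "c = 1")
  case True
  then show ?thesis
    using max_clean by simp
next
  case False
  define m where "m = max (ts / as) (ts / (1 - as))"
  have fit_m: "max ((as + ts) / as) ((1 - as + ts) / (1 - as)) = 1 + m"
    unfolding m_def by (rule balanced_fit_max[OF bounds(3,4)])
  then have "0 \<le> m"
    using fits_ge_one by simp
  have ts: "0 \<le> ts" "ts / as \<le> m" "ts / (1 - as) \<le> m"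
    using \<open>0 \<le> m\<close> bounds(3,4) by (auto simp: m_def max_def zero_le_divide_iff split: if_splits)
  have ct: "\<bar>c * t\<bar> \<le> a" "\<bar>c * t\<bar> \<le> 1 - a" "\<bar>c * ts\<bar> \<le> as" "\<bar>c * ts\<bar> \<le> 1 - as"
  proof -
    have "\<bar>c * x\<bar> \<le> \<bar>x\<bar>" for x
      using c by (simp add: abs_mult mult_left_le_one_le)
    then show "\<bar>c * t\<bar> \<le> a" "\<bar>c * t\<bar> \<le> 1 - a" "\<bar>c * ts\<bar> \<le> as" "\<bar>c * ts\<bar> \<le> 1 - as"
      using bounds by (meson order_trans)+
  qed
  have "1 + m \<le> min ((a + c * t) / a) ((1 - a + c * t) / (1 - a))"
    using fits unfolding fit_m .
  then have fits_h: "1 + m \<le> (a + c * t) / a" "1 + m \<le> (1 - a + c * t) / (1 - a)"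
    by (simp_all add: min.bounded_iff)
  with \<open>0 \<le> m\<close> have "1 \<le> (a + c * t) / a" "1 \<le> (1 - a + c * t) / (1 - a)"
    by linarith+
  with ct(1,2) have a: "0 < a" "a < 1" and "0 \<le> c * t"
    by (rule balanced_fits_ge_one)+
  with c have "0 \<le> t"
    by (simp add: zero_le_mult_iff)
  show ?thesis
  proof (cases "t = 0")
    case True
    then show ?thesis
      using balanced_div_nonneg[OF ct(3,4)] by simp
  next
    case False
    with \<open>0 \<le> t\<close> c \<open>c \<noteq> 1\<close> have "c * t < t"
      by simp
    have "m \<le> c * t / a" "m \<le> c * t / (1 - a)"
      using fits_h a
      by (simp_all add: field_simps)
    moreover have "c * t / a < t / a" "c * t / (1 - a) < t / (1 - a)"
      using \<open>c * t < t\<close> a by (simp_all add: divide_strict_right_mono)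
    ultimately have "m < t / a" "m < t / (1 - a)"
      by linarith+
    moreover have "t / a \<le> 1" "t / (1 - a) \<le> 1"
      using bounds a by auto
    ultimately have "symmetrized f m / 2 < balanced_div f a t"
      using a \<open>0 \<le> m\<close> by (intro half_symmetrized_less_balanced_div)
    also have "\<dots> \<le> balanced_div f as ts"
      by (rule max_clean)
    also have "\<dots> \<le> symmetrized f m / 2"
      using bounds ts \<open>m < t / a\<close> \<open>t / a \<le> 1\<close>
      by (intro balanced_div_le_half_symmetrized) auto
    finally show ?thesis
      by simp
  qed
qed

end

lemma fdiv_term_cancel: "0 \<le> q \<Longrightarrow> ereal q * f (q * s / q) = ereal q * f s"
  by (cases "q = 0") (auto simp: zero_ereal_def[symmetric])

lemma fdiv_labels:
  "fdiv f P Q =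
     ereal (Q (1, 1)) * f (P (1, 1) / Q (1, 1)) + ereal (Q (1, -1)) * f (P (1, -1) / Q (1, -1))
     + (ereal (Q (-1, 1)) * f (P (-1, 1) / Q (-1, 1)) + ereal (Q (-1, -1)) * f (P (-1, -1) / Q (-1, -1)))"
  by (simp add: fdiv_def labels_def add_ac)

lemma (in prob_space) prob_split_label:
  assumes "{\<omega> \<in> space M. P \<omega>} \<in> events" and "Z \<in> M \<rightarrow>\<^sub>M count_space UNIV"
    and "\<forall>\<omega>\<in>space M. Z \<omega> \<in> labels"
  shows "\<P>(\<omega> in M. P \<omega>) = \<P>(\<omega> in M. P \<omega> \<and> Z \<omega> = 1) + \<P>(\<omega> in M. P \<omega> \<and> Z \<omega> = -1)"
proof -
  have "{\<omega> \<in> space M. P \<omega>} = {\<omega> \<in> space M. P \<omega> \<and> Z \<omega> = 1} \<union> {\<omega> \<in> space M. P \<omega> \<and> Z \<omega> = -1}"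
    using assms(3) by (auto simp: labels_def)
  moreover have "{\<omega> \<in> space M. P \<omega> \<and> Z \<omega> = y} \<in> events" for y
    using assms(1,2) by measurable
  ultimately show ?thesis
    by (auto intro: finite_measure_Union)
qed

context prob_space
begin

context
  fixes Z R :: "'a \<Rightarrow> int"
  assumes Z_meas [measurable]: "Z \<in> M \<rightarrow>\<^sub>M count_space UNIV"
    and R_meas [measurable]: "R \<in> M \<rightarrow>\<^sub>M count_space UNIV"
    and Z_labels: "\<forall>\<omega>\<in>space M. Z \<omega> \<in> labels"
    and R_labels: "\<forall>\<omega>\<in>space M. R \<omega> \<in> labels"
    and R_half: "\<P>(\<omega> in M. R \<omega> = 1) = 1 / 2"
begin

lemma balanced_label_table:
  defines "a \<equiv> \<P>(\<omega> in M. Z \<omega> = 1)" and "t \<equiv> pos_margin M Z R"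
  shows "\<P>(\<omega> in M. Z \<omega> = 1 \<and> R \<omega> = 1) = (a + t) / 2"
    and "\<P>(\<omega> in M. Z \<omega> = 1 \<and> R \<omega> = -1) = (a - t) / 2"
    and "\<P>(\<omega> in M. Z \<omega> = -1 \<and> R \<omega> = 1) = (1 - a - t) / 2"
    and "\<P>(\<omega> in M. Z \<omega> = -1 \<and> R \<omega> = -1) = (1 - a + t) / 2"
    and "\<P>(\<omega> in M. Z \<omega> = -1) = 1 - a"
    and "\<P>(\<omega> in M. R \<omega> = -1) = 1 / 2"
proof -
  have split_R: "\<P>(\<omega> in M. Z \<omega> = y) = \<P>(\<omega> in M. Z \<omega> = y \<and> R \<omega> = 1) + \<P>(\<omega> in M. Z \<omega> = y \<and> R \<omega> = -1)"
    for y by (rule prob_split_label[OF _ R_meas R_labels]) measurable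
  have split_Z: "\<P>(\<omega> in M. R \<omega> = y) = \<P>(\<omega> in M. Z \<omega> = 1 \<and> R \<omega> = y) + \<P>(\<omega> in M. Z \<omega> = -1 \<and> R \<omega> = y)"
    for y
  proof -
    have "\<P>(\<omega> in M. R \<omega> = y) = \<P>(\<omega> in M. R \<omega> = y \<and> Z \<omega> = 1) + \<P>(\<omega> in M. R \<omega> = y \<and> Z \<omega> = -1)"
      by (rule prob_split_label[OF _ Z_meas Z_labels]) measurable
    then show ?thesis
      by (simp add: conj_commute)
  qed
  have total: "1 = \<P>(\<omega> in M. Z \<omega> = 1) + \<P>(\<omega> in M. Z \<omega> = -1)"
    using prob_split_label[OF _ Z_meas Z_labels, of "\<lambda>_. True"] prob_space by simp
  have a_eq: "a = \<P>(\<omega> in M. Z \<omega> = 1)"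
    by (simp add: a_def)
  have t_eq: "t = \<P>(\<omega> in M. Z \<omega> = 1 \<and> R \<omega> = 1) - \<P>(\<omega> in M. Z \<omega> = 1 \<and> R \<omega> = -1)"
    by (simp add: t_def pos_margin_def)
  show "\<P>(\<omega> in M. Z \<omega> = 1 \<and> R \<omega> = 1) = (a + t) / 2"
    and "\<P>(\<omega> in M. Z \<omega> = 1 \<and> R \<omega> = -1) = (a - t) / 2"
    and "\<P>(\<omega> in M. Z \<omega> = -1 \<and> R \<omega> = 1) = (1 - a - t) / 2"
    and "\<P>(\<omega> in M. Z \<omega> = -1 \<and> R \<omega> = -1) = (1 - a + t) / 2"
    and "\<P>(\<omega> in M. Z \<omega> = -1) = 1 - a"
    and "\<P>(\<omega> in M. R \<omega> = -1) = 1 / 2"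
    using split_R[of 1] split_R[of "-1"] split_Z[of 1] split_Z[of "-1"] total R_half a_eq t_eq
    by argo+
qed

lemma balanced_label_margin_bounds:
  "\<bar>pos_margin M Z R\<bar> \<le> \<P>(\<omega> in M. Z \<omega> = 1)"
  "\<bar>pos_margin M Z R\<bar> \<le> 1 - \<P>(\<omega> in M. Z \<omega> = 1)"
  using balanced_label_table(1-4) measure_nonneg[of M "{\<omega> \<in> space M. Z \<omega> = 1 \<and> R \<omega> = 1}"]
    measure_nonneg[of M "{\<omega> \<in> space M. Z \<omega> = 1 \<and> R \<omega> = -1}"]
    measure_nonneg[of M "{\<omega> \<in> space M. Z \<omega> = -1 \<and> R \<omega> = 1}"]
    measure_nonneg[of M "{\<omega> \<in> space M. Z \<omega> = -1 \<and> R \<omega> = -1}"]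
  by argo+

lemma FIT_balanced_label:
  defines "a \<equiv> \<P>(\<omega> in M. Z \<omega> = 1)" and "t \<equiv> pos_margin M Z R"
  shows "FIT M Z R 1 1 = (a + t) / a" and "FIT M Z R (-1) (-1) = (1 - a + t) / (1 - a)"
proof -
  have half: "x / 2 / (1 / 2) / z = x / z" for x z :: real
    by simp
  show "FIT M Z R 1 1 = (a + t) / a" and "FIT M Z R (-1) (-1) = (1 - a + t) / (1 - a)"
    unfolding a_def t_def FIT_def balanced_label_table(1,4,5,6) R_half by (fact half)+
qed

lemma fdiv_balanced_label:
  assumes f_not_MInfty: "\<And>v. f v \<noteq> -\<infinity>"
  shows "fdiv f (Pj M Z R) (Qj M Z R) = balanced_div f (\<P>(\<omega> in M. Z \<omega> = 1)) (pos_margin M Z R)"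
proof -
  define a where "a = \<P>(\<omega> in M. Z \<omega> = 1)"
  define t where "t = pos_margin M Z R"
  note table = balanced_label_table[folded a_def t_def]
  have "0 \<le> a" "0 \<le> 1 - a" "\<bar>t\<bar> \<le> a" "\<bar>t\<bar> \<le> 1 - a"
    using balanced_label_margin_bounds unfolding a_def t_def by argo+
  then have cells: "(a + t) / 2 = a / 2 * (1 + t / a)" "(a - t) / 2 = a / 2 * (1 - t / a)"
      "(1 - a + t) / 2 = (1 - a) / 2 * (1 + t / (1 - a))"
      "(1 - a - t) / 2 = (1 - a) / 2 * (1 - t / (1 - a))"
    by (cases "a = 0"; cases "a = 1"; auto simp: field_simps)+
  have P: "Pj M Z R (1, 1) = a / 2 * (1 + t / a)" "Pj M Z R (1, -1) = a / 2 * (1 - t / a)"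
    "Pj M Z R (-1, 1) = (1 - a) / 2 * (1 - t / (1 - a))"
    "Pj M Z R (-1, -1) = (1 - a) / 2 * (1 + t / (1 - a))"
    unfolding Pj_def prod.case table cells by (rule refl)+
  have Q: "Qj M Z R (1, 1) = a / 2" "Qj M Z R (1, -1) = a / 2"
    "Qj M Z R (-1, 1) = (1 - a) / 2" "Qj M Z R (-1, -1) = (1 - a) / 2"
    unfolding Qj_def prod.case a_def[symmetric] table R_half by simp_all
  have "fdiv f (Pj M Z R) (Qj M Z R) = ereal (a / 2) * f (1 + t / a) + ereal (a / 2) * f (1 - t / a)
      + (ereal ((1 - a) / 2) * f (1 - t / (1 - a)) + ereal ((1 - a) / 2) * f (1 + t / (1 - a)))"
    using \<open>0 \<le> a\<close> \<open>0 \<le> 1 - a\<close> unfolding fdiv_labels P Q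
    by (simp add: fdiv_term_cancel zero_ereal_def[symmetric])
  also have "\<dots> = balanced_div f a t"
    using \<open>0 \<le> a\<close> \<open>0 \<le> 1 - a\<close> f_not_MInfty
    by (simp add: balanced_div_def symmetrized_def distrib_left_ereal_nn mult.commute[of "ereal _"] add_ac)
  finally show ?thesis
    unfolding a_def t_def .
qed

end

end

section \<open>Symmetric label noise\<close>

locale symmetric_label_noise = prob_space M for M :: "'a measure" +
  fixes MX :: "'x measure" and X :: "'a \<Rightarrow> 'x" and Y Yt :: "'a \<Rightarrow> int" and e :: real
  assumes X_meas [measurable]: "X \<in> M \<rightarrow>\<^sub>M MX"
    and Y_meas [measurable]: "Y \<in> M \<rightarrow>\<^sub>M count_space UNIV"
    and Yt_meas [measurable]: "Yt \<in> M \<rightarrow>\<^sub>M count_space UNIV"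
    and Y_labels: "\<forall>\<omega>\<in>space M. Y \<omega> \<in> labels"
    and Yt_labels: "\<forall>\<omega>\<in>space M. Yt \<omega> \<in> labels"
    and noise_pos: "\<forall>A\<in>sets MX.
           \<P>(\<omega> in M. X \<omega> \<in> A \<and> Y \<omega> = 1 \<and> Yt \<omega> = -1) = e * \<P>(\<omega> in M. X \<omega> \<in> A \<and> Y \<omega> = 1)
         \<and> \<P>(\<omega> in M. X \<omega> \<in> A \<and> Y \<omega> = 1 \<and> Yt \<omega> = 1) = (1 - e) * \<P>(\<omega> in M. X \<omega> \<in> A \<and> Y \<omega> = 1)"
    and noise_neg: "\<forall>A\<in>sets MX.
           \<P>(\<omega> in M. X \<omega> \<in> A \<and> Y \<omega> = -1 \<and> Yt \<omega> = 1) = e * \<P>(\<omega> in M. X \<omega> \<in> A \<and> Y \<omega> = -1)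
         \<and> \<P>(\<omega> in M. X \<omega> \<in> A \<and> Y \<omega> = -1 \<and> Yt \<omega> = -1) = (1 - e) * \<P>(\<omega> in M. X \<omega> \<in> A \<and> Y \<omega> = -1)"
    and balanced: "\<P>(\<omega> in M. Y \<omega> = 1) = \<P>(\<omega> in M. Y \<omega> = -1)"
begin

lemma clean_label_half: "\<P>(\<omega> in M. Y \<omega> = 1) = 1 / 2"
  using prob_split_label[OF _ Y_meas Y_labels, of "\<lambda>_. True"] prob_space balanced by simp

lemma noisy_joint:
  assumes "A \<in> sets MX"
  shows "\<P>(\<omega> in M. X \<omega> \<in> A \<and> Yt \<omega> = 1)
           = (1 - e) * \<P>(\<omega> in M. X \<omega> \<in> A \<and> Y \<omega> = 1) + e * \<P>(\<omega> in M. X \<omega> \<in> A \<and> Y \<omega> = -1)"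
    and "\<P>(\<omega> in M. X \<omega> \<in> A \<and> Yt \<omega> = -1)
           = e * \<P>(\<omega> in M. X \<omega> \<in> A \<and> Y \<omega> = 1) + (1 - e) * \<P>(\<omega> in M. X \<omega> \<in> A \<and> Y \<omega> = -1)"
proof -
  have "{\<omega> \<in> space M. X \<omega> \<in> A \<and> Yt \<omega> = y} \<in> events" for y
    using assms by measurable
  note split = prob_split_label[OF this Y_meas Y_labels]
  show "\<P>(\<omega> in M. X \<omega> \<in> A \<and> Yt \<omega> = 1)
           = (1 - e) * \<P>(\<omega> in M. X \<omega> \<in> A \<and> Y \<omega> = 1) + e * \<P>(\<omega> in M. X \<omega> \<in> A \<and> Y \<omega> = -1)"
    and "\<P>(\<omega> in M. X \<omega> \<in> A \<and> Yt \<omega> = -1)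
           = e * \<P>(\<omega> in M. X \<omega> \<in> A \<and> Y \<omega> = 1) + (1 - e) * \<P>(\<omega> in M. X \<omega> \<in> A \<and> Y \<omega> = -1)"
    using split[of 1] split[of "-1"] noise_pos[rule_format, OF assms] noise_neg[rule_format, OF assms]
    by (simp_all add: conj_ac)
qed

lemma noisy_label_half: "\<P>(\<omega> in M. Yt \<omega> = 1) = 1 / 2"
proof -
  have X_space: "{\<omega> \<in> space M. X \<omega> \<in> space MX \<and> Q \<omega>} = {\<omega> \<in> space M. Q \<omega>}" for Q
    using measurable_space[OF X_meas] by auto
  have "\<P>(\<omega> in M. Y \<omega> = -1) = 1 / 2"
    using clean_label_half balanced by simp
  then show ?thesis
    using noisy_joint(1)[OF sets.top] clean_label_half unfolding X_space by (simp add: field_simps)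
qed

lemma pos_margin_noisy:
  assumes [measurable]: "h \<in> MX \<rightarrow>\<^sub>M count_space UNIV"
  shows "pos_margin M (h \<circ> X) Yt = (1 - 2 * e) * pos_margin M (h \<circ> X) Y"
proof -
  define A where "A = {x \<in> space MX. h x = 1}"
  have "A \<in> sets MX"
    unfolding A_def by measurable
  moreover have "{\<omega> \<in> space M. X \<omega> \<in> A \<and> Q \<omega>} = {\<omega> \<in> space M. (h \<circ> X) \<omega> = 1 \<and> Q \<omega>}" for Q
    using measurable_space[OF X_meas] by (auto simp: A_def)
  ultimately show ?thesis
    using noisy_joint[of A] by (simp add: pos_margin_def algebra_simps)
qed

lemma classifier_balanced_tables:
  assumes h_meas [measurable]: "h \<in> MX \<rightarrow>\<^sub>M count_space UNIV"
    and h_labels: "\<forall>x\<in>space MX. h x \<in> labels"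
    and f_not_MInfty: "\<And>v. f v \<noteq> -\<infinity>"
  defines "a \<equiv> \<P>(\<omega> in M. (h \<circ> X) \<omega> = 1)" and "t \<equiv> pos_margin M (h \<circ> X) Y"
  shows "fdiv f (Pj M (h \<circ> X) Y) (Qj M (h \<circ> X) Y) = balanced_div f a t"
    and "fdiv f (Pj M (h \<circ> X) Yt) (Qj M (h \<circ> X) Yt) = balanced_div f a ((1 - 2 * e) * t)"
    and "FIT M (h \<circ> X) Y 1 1 = (a + t) / a"
    and "FIT M (h \<circ> X) Y (-1) (-1) = (1 - a + t) / (1 - a)"
    and "FIT M (h \<circ> X) Yt 1 1 = (a + (1 - 2 * e) * t) / a"
    and "FIT M (h \<circ> X) Yt (-1) (-1) = (1 - a + (1 - 2 * e) * t) / (1 - a)"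
    and "\<bar>t\<bar> \<le> a" and "\<bar>t\<bar> \<le> 1 - a"
proof -
  have hX_meas: "h \<circ> X \<in> M \<rightarrow>\<^sub>M count_space UNIV"
    by measurable
  have hX_labels: "\<forall>\<omega>\<in>space M. (h \<circ> X) \<omega> \<in> labels"
    using h_labels measurable_space[OF X_meas] by simp
  note clean = hX_meas Y_meas hX_labels Y_labels clean_label_half
  note noisy = hX_meas Yt_meas hX_labels Yt_labels noisy_label_half
  note noisy_margin = pos_margin_noisy[OF h_meas, symmetric]
  show "fdiv f (Pj M (h \<circ> X) Y) (Qj M (h \<circ> X) Y) = balanced_div f a t"
    unfolding a_def t_def using clean f_not_MInfty by (rule fdiv_balanced_label)
  show "fdiv f (Pj M (h \<circ> X) Yt) (Qj M (h \<circ> X) Yt) = balanced_div f a ((1 - 2 * e) * t)"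
    unfolding a_def t_def noisy_margin using noisy f_not_MInfty by (rule fdiv_balanced_label)
  show "FIT M (h \<circ> X) Y 1 1 = (a + t) / a"
    and "FIT M (h \<circ> X) Y (-1) (-1) = (1 - a + t) / (1 - a)"
    unfolding a_def t_def using clean by (rule FIT_balanced_label)+
  show "FIT M (h \<circ> X) Yt 1 1 = (a + (1 - 2 * e) * t) / a"
    and "FIT M (h \<circ> X) Yt (-1) (-1) = (1 - a + (1 - 2 * e) * t) / (1 - a)"
    unfolding a_def t_def noisy_margin using noisy by (rule FIT_balanced_label)+
  show "\<bar>t\<bar> \<le> a" and "\<bar>t\<bar> \<le> 1 - a"
    unfolding a_def t_def using clean by (rule balanced_label_margin_bounds)+
qed

end

theorem theorem8:
  fixes M :: "'a measure" and MX :: "'x measure"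
    and X :: "'a \<Rightarrow> 'x" and Y Yt :: "'a \<Rightarrow> int"
    and e_p e_m :: real
    and H :: "('x \<Rightarrow> int) set" and hs :: "'x \<Rightarrow> int"
    and f :: "real \<Rightarrow> ereal"
  assumes "prob_space M"
    and "X \<in> M \<rightarrow>\<^sub>M MX"
    and "Y \<in> M \<rightarrow>\<^sub>M count_space UNIV" and "Yt \<in> M \<rightarrow>\<^sub>M count_space UNIV"
    and "\<forall>\<omega>\<in>space M. Y \<omega> \<in> labels" and "\<forall>\<omega>\<in>space M. Yt \<omega> \<in> labels"
    and "0 \<le> e_p" and "0 \<le> e_m" and "e_p + e_m < 1"
    and noise_pos: "\<forall>A\<in>sets MX.
           measure M {\<omega>\<in>space M. X \<omega> \<in> A \<and> Y \<omega> = 1 \<and> Yt \<omega> = -1}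
             = e_p * measure M {\<omega>\<in>space M. X \<omega> \<in> A \<and> Y \<omega> = 1}
         \<and> measure M {\<omega>\<in>space M. X \<omega> \<in> A \<and> Y \<omega> = 1 \<and> Yt \<omega> = 1}
             = (1 - e_p) * measure M {\<omega>\<in>space M. X \<omega> \<in> A \<and> Y \<omega> = 1}"
    and noise_neg: "\<forall>A\<in>sets MX.
           measure M {\<omega>\<in>space M. X \<omega> \<in> A \<and> Y \<omega> = -1 \<and> Yt \<omega> = 1}
             = e_m * measure M {\<omega>\<in>space M. X \<omega> \<in> A \<and> Y \<omega> = -1}
         \<and> measure M {\<omega>\<in>space M. X \<omega> \<in> A \<and> Y \<omega> = -1 \<and> Yt \<omega> = -1}
             = (1 - e_m) * measure M {\<omega>\<in>space M. X \<omega> \<in> A \<and> Y \<omega> = -1}"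
    and balanced: "measure M {\<omega>\<in>space M. Y \<omega> = 1} = measure M {\<omega>\<in>space M. Y \<omega> = -1}"
    and sym: "e_p = e_m"
    and H_meas: "\<forall>h\<in>H. h \<in> MX \<rightarrow>\<^sub>M count_space UNIV"
    and H_vals: "\<forall>h\<in>H. \<forall>x\<in>space MX. h x \<in> labels"
    and f_cases: "f \<in> {f_TV, f_JS, f_SH, f_Pearson, f_Neyman, f_KL, f_RKL}"
    and hs_in: "hs \<in> H"
    and hs_max: "\<forall>h\<in>H. fdiv f (Pj M (h \<circ> X) Y) (Qj M (h \<circ> X) Y)
                        \<le> fdiv f (Pj M (hs \<circ> X) Y) (Qj M (hs \<circ> X) Y)"
  shows "hs \<in> Hstar M X Y Yt H hs \<and>
         (\<forall>h\<in>Hstar M X Y Yt H hs.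
            fdiv f (Pj M (h \<circ> X) Yt) (Qj M (h \<circ> X) Yt)
              \<le> fdiv f (Pj M (hs \<circ> X) Yt) (Qj M (hs \<circ> X) Yt))"
proof -
  interpret symmetric_label_noise M MX X Y Yt e_p
    using assms noise_neg[folded sym]
    by (simp add: symmetric_label_noise_def symmetric_label_noise_axioms_def)
  interpret admissible_generator f
    using f_cases by (rule admissible_generator_cases)
  have noise_factor: "0 < 1 - 2 * e_p" "1 - 2 * e_p \<le> 1"
    using assms sym by linarith+
  show ?thesis
  proof (intro conjI ballI)
    show "hs \<in> Hstar M X Y Yt H hs"
      by (simp add: Hstar_def)
  next
    fix h assume "h \<in> Hstar M X Y Yt H hs"
    show "fdiv f (Pj M (h \<circ> X) Yt) (Qj M (h \<circ> X) Yt) \<le> fdiv f (Pj M (hs \<circ> X) Yt) (Qj M (hs \<circ> X) Yt)"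
    proof (cases "h = hs")
      case False
      with \<open>h \<in> Hstar M X Y Yt H hs\<close> have "h \<in> H"
        and fits: "max (FIT M (hs \<circ> X) Y 1 1) (FIT M (hs \<circ> X) Y (-1) (-1))
                     \<le> min (FIT M (h \<circ> X) Yt 1 1) (FIT M (h \<circ> X) Yt (-1) (-1))"
        and fits_ge_one: "1 \<le> max (FIT M (hs \<circ> X) Y 1 1) (FIT M (hs \<circ> X) Y (-1) (-1))"
        by (auto simp: Hstar_def)
      note h = classifier_balanced_tables[OF bspec[OF H_meas \<open>h \<in> H\<close>] bspec[OF H_vals \<open>h \<in> H\<close>] f_not_MInfty]
      note s = classifier_balanced_tables[OF bspec[OF H_meas hs_in] bspec[OF H_vals hs_in] f_not_MInfty]
      have "fdiv f (Pj M (h \<circ> X) Y) (Qj M (h \<circ> X) Y) \<le> fdiv f (Pj M (hs \<circ> X) Y) (Qj M (hs \<circ> X) Y)"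
        using hs_max \<open>h \<in> H\<close> by blast
      from this fits fits_ge_one show ?thesis
        unfolding h(1-6) s(1-6) by (rule balanced_div_noisy_le[OF h(7,8) s(7,8) noise_factor])
    qed simp
  qed
qed

end
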